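(* Assume $W>L$. For a generic signal $x\in\mathbb{C}^N$ and a generic window $w\in\mathbb{C}^W$, the pair $(x,w)$ is uniquely determined, modulo the scaling ambiguities described below, by a suitably chosen set of $N+W-L$ of the blind STFT measurements $\hat y_{x,w}[k,m]$. That is, there is a set $\Omega$ of $N+W-L$ index pairs $(k,m)$ such that for generic $(x,w)$, whenever $(x',w')\in\mathbb{C}^N\times\mathbb{C}^W$ satisfies $\hat y_{x',w'}[k,m]=\hat y_{x,w}[k,m]$ for all $(k,m)\in\Omega$, there exists $\lambda\in(\mathbb{C}^\times)^L$ with $(x',w')=\lambda\circ(x,w)$.
   Context: Let $N\ge W>L\ge 1$ be integers. Signals $x\in\mathbb{C}^N$ and windows $w\in\mathbb{C}^W$ are extended by zero outside $\{0,\ldots,N-1\}$, resp. $\{0,\ldots,W-1\}$. The blind STFT is $\hat y_{x,w}[k,m]=\sum_{n=0}^{N-1}x[n]w[mL-n]e^{-2\pi i kn/N}$ for integers $k$ and $m=0,\ldots,M-1$, $M=\lceil (N+W-1)/L\rceil$. For $\lambda=(\lambda_0,\ldots,\lambda_{L-1})\in(\mathbb{C}^\times)^L$, the scaling action is $\lambda\circ(x,w)=(x',w')$ with $x'[n]=\lambda_{n\bmod L}x[n]$ and $w'[n]=\lambda^{-1}_{(L-n)\bmod L}w[n]$. "For generic $(x,w)$" means: the set of pairs $(x,w)$ for which the conclusion fails is contained in the zero set of a nonzero polynomial in the real and imaginary parts of the entries of $x$ and $w$. *)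

theory Defs
  imports Complex_Main
begin

text \<open>Signals of length n: functions on the integers, zero outside {0..<n}
  (this realises the zero extension).\<close>
definition is_signal :: "nat \<Rightarrow> (int \<Rightarrow> complex) \<Rightarrow> bool" where
  "is_signal n x \<longleftrightarrow> (\<forall>j. (j < 0 \<or> j \<ge> int n) \<longrightarrow> x j = 0)"

definition num_shifts :: "nat \<Rightarrow> nat \<Rightarrow> nat \<Rightarrow> nat" where
  "num_shifts N W L = nat \<lceil>real (N + W - 1) / real L\<rceil>"

definition blind_stft ::
  "nat \<Rightarrow> nat \<Rightarrow> (int \<Rightarrow> complex) \<Rightarrow> (int \<Rightarrow> complex) \<Rightarrow> int \<Rightarrow> nat \<Rightarrow> complex" where
  "blind_stft N L x w k m =
     (\<Sum>n\<in>{0..<int N}. x n * w (int m * int L - n)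
        * exp (- 2 * pi * \<i> * of_int k * of_int n / of_nat N))"

text \<open>Scaling action of lambda in (C^x)^L (lambda indexed by 0..L-1).\<close>
definition scale_sig :: "nat \<Rightarrow> (int \<Rightarrow> complex) \<Rightarrow> (int \<Rightarrow> complex) \<Rightarrow> (int \<Rightarrow> complex)" where
  "scale_sig L lam x = (\<lambda>n. lam (n mod int L) * x n)"

definition scale_win :: "nat \<Rightarrow> (int \<Rightarrow> complex) \<Rightarrow> (int \<Rightarrow> complex) \<Rightarrow> (int \<Rightarrow> complex)" where
  "scale_win L lam w = (\<lambda>n. inverse (lam ((int L - n) mod int L)) * w n)"

definition realify :: "nat \<Rightarrow> (int \<Rightarrow> complex) \<Rightarrow> (int \<Rightarrow> complex) \<Rightarrow> nat \<Rightarrow> real" where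
  "realify N x w i =
     (if i < 2 * N then
        (if even i then Re (x (int (i div 2))) else Im (x (int (i div 2))))
      else
        (let j = i - 2 * N in
          if even j then Re (w (int (j div 2))) else Im (w (int (j div 2)))))"

text \<open>Multivariate real polynomials in the variables 0..nv-1, given by a
  finitely supported coefficient function on exponent vectors (exponents
  vanish outside 0..nv-1).\<close>
definition is_poly :: "nat \<Rightarrow> ((nat \<Rightarrow> nat) \<Rightarrow> real) \<Rightarrow> bool" where
  "is_poly nv c \<longleftrightarrow> finite {a. c a \<noteq> 0} \<and>
     (\<forall>a. c a \<noteq> 0 \<longrightarrow> (\<forall>i\<ge>nv. a i = 0))"

definition nonzero_poly :: "nat \<Rightarrow> ((nat \<Rightarrow> nat) \<Rightarrow> real) \<Rightarrow> bool" where
  "nonzero_poly nv c \<longleftrightarrow> is_poly nv c \<and> (\<exists>a. c a \<noteq> 0)"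

definition poly_eval :: "nat \<Rightarrow> ((nat \<Rightarrow> nat) \<Rightarrow> real) \<Rightarrow> (nat \<Rightarrow> real) \<Rightarrow> real" where
  "poly_eval nv c z = (\<Sum>a\<in>{a. c a \<noteq> 0}. c a * (\<Prod>i<nv. z i ^ a i))"

end

theory Submission
  imports Defs "HOL-Analysis.Complex_Transcendental" "HOL-Computational_Algebra.Polynomial"
begin

text \<open>At shift \<open>m\<close> the measurements are the DFT of the products \<open>x[n] w[mL - n]\<close>.
  If these products are known outside a set \<open>S\<close> of time indices, the first \<open>|S|\<close>
  frequencies determine them on \<open>S\<close> as well, because the roots of unity
  \<open>exp(-2\<pi>in/N)\<close> are distinct (a Vandermonde system). Shifts 0 and 1 give \<open>x[0] w[0]\<close>
  and all \<open>x[n] w[L - n]\<close>, which determine \<open>x\<close> and \<open>w\<close> on \<open>[0, L]\<close> up to the scaling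
  \<open>\<lambda>\<^sub>j = x'[j] / x[j]\<close>. Once \<open>(x', w') = \<lambda> \<circ> (x, w)\<close> is known on \<open>[0, mL]\<close>, the only
  unknown products at shift \<open>m + 1\<close> are those involving an entry of \<open>x\<close> or \<open>w\<close> in
  \<open>(mL, (m + 1)L]\<close>; summed over all shifts there are at most \<open>N + W - L\<close> of them.
  Genericity is needed only to make \<open>x[0..L-1]\<close> and \<open>w[0..L]\<close> nonzero, which holds
  off the zero set of the monomial \<open>\<Prod> Re x[j] \<Prod> Re w[j]\<close>.\<close>

section \<open>Vandermonde systems of DFT coefficients\<close>

lemma power_sums_eq_0_imp_eq_0:
  fixes z D :: "'a \<Rightarrow> 'b::idom"
  assumes "finite S" and "inj_on z S"
    and power_sums: "\<And>k. k < card S \<Longrightarrow> (\<Sum>n\<in>S. z n ^ k * D n) = 0"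
    and "n0 \<in> S"
  shows "D n0 = 0"
proof -
  \<comment> \<open>Pair the power sums with the coefficients of a polynomial vanishing at every \<open>z n\<close> but \<open>z n0\<close>.\<close>
  define q where "q = (\<Prod>m\<in>S - {n0}. [:- z m, 1:])"
  have "degree q \<le> card (S - {n0})"
    unfolding q_def using degree_prod_sum_le[of "S - {n0}" "\<lambda>m. [:- z m, 1:]"] assms(1)
    by (simp add: o_def)
  also have "\<dots> < card S" using assms(1,4) by (rule card_Diff1_less)
  finally have deg: "degree q < card S" .
  have "0 = (\<Sum>k\<le>degree q. coeff q k * (\<Sum>n\<in>S. z n ^ k * D n))"
    using power_sums deg by simp
  also have "\<dots> = (\<Sum>n\<in>S. D n * poly q (z n))"
    by (simp add: poly_altdef sum_distrib_left sum_distrib_right mult_ac sum.swap[of _ S])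
  also have "\<dots> = D n0 * poly q (z n0)"
  proof -
    have "poly q (z n) = 0" if "n \<in> S - {n0}" for n
      using assms(1) that by (simp add: q_def poly_prod) blast
    then show ?thesis using assms(1,4) by (simp add: sum.remove)
  qed
  finally have "D n0 * poly q (z n0) = 0" by simp
  moreover have "poly q (z n0) \<noteq> 0"
    using assms(1,2,4) by (auto simp: q_def poly_prod inj_on_def)
  ultimately show ?thesis by simp
qed

definition dft_root :: "nat \<Rightarrow> int \<Rightarrow> complex" where
  "dft_root N n = exp (- 2 * pi * \<i> * of_int n / of_nat N)"

lemma inj_on_dft_root: "inj_on (dft_root N) {0..<int N}"
proof (cases "N = 0")
  case False
  \<comment> \<open>The exponents lie in an open disc of radius \<open>\<pi>\<close>, on which \<open>exp\<close> is injective.\<close>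
  let ?c = "- pi * \<i> * (of_nat N - 1) / of_nat N"
  have "(\<lambda>n. - 2 * pi * \<i> * of_int n / of_nat N) ` {0..<int N} \<subseteq> ball ?c pi"
  proof clarify
    fix n :: int assume n: "n \<in> {0..<int N}"
    define r where "r = pi * of_int (2 * n - (int N - 1)) / N"
    have "dist ?c (- 2 * pi * \<i> * of_int n / of_nat N) = norm (of_real r * \<i>)"
      unfolding dist_norm r_def using False by (simp add: field_simps)
    also have "\<dots> = \<bar>r\<bar>" by (simp only: norm_mult norm_ii norm_of_real mult_1_right)
    also have "\<dots> = pi * \<bar>of_int (2 * n - (int N - 1))\<bar> / N"
      by (simp add: r_def abs_mult)
    also have "\<dots> < pi"
      using n False by (simp add: field_simps del: of_int_diff) linarith
    finally show "- 2 * pi * \<i> * of_int n / of_nat N \<in> ball ?c pi" by simp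
  qed
  moreover have "inj_on (\<lambda>n. - 2 * pi * \<i> * of_int n / of_nat N) {0..<int N}"
    using False by (auto simp: inj_on_def)
  ultimately show ?thesis
    unfolding dft_root_def using comp_inj_on[OF _ inj_on_subset[OF inj_on_exp_pi]] by (auto simp: o_def) 
qed simp

lemma blind_stft_eq_power_sum:
  "blind_stft N L x w (int k) m = (\<Sum>n\<in>{0..<int N}. dft_root N n ^ k * (x n * w (int m * int L - n)))"
proof -
  have "exp (- 2 * pi * \<i> * of_int (int k) * of_int n / of_nat N) = dft_root N n ^ k" for n
    unfolding dft_root_def exp_of_nat_mult[symmetric] by (simp add: field_simps)
  then show ?thesis unfolding blind_stft_def by (simp add: mult_ac)
qed

lemma products_eq_if_blind_stft_eq:
  fixes x w x' w' :: "int \<Rightarrow> complex"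
  assumes "S \<subseteq> {0..<int N}"
    and outside: "\<And>n. n \<in> {0..<int N} - S \<Longrightarrow> x' n * w' (int m * int L - n) = x n * w (int m * int L - n)"
    and stft: "\<And>k. k < card S \<Longrightarrow> blind_stft N L x' w' (int k) m = blind_stft N L x w (int k) m"
    and "n \<in> {0..<int N}"
  shows "x' n * w' (int m * int L - n) = x n * w (int m * int L - n)"
proof (cases "n \<in> S")
  case True
  define D where "D n = x' n * w' (int m * int L - n) - x n * w (int m * int L - n)" for n
  have "finite S" using assms(1) finite_subset by blast
  moreover have "inj_on (dft_root N) S" using inj_on_dft_root assms(1) by (rule inj_on_subset)
  moreover have "(\<Sum>n\<in>S. dft_root N n ^ k * D n) = 0" if "k < card S" for k
  proof -
    have "(\<Sum>n\<in>S. dft_root N n ^ k * D n) = (\<Sum>n\<in>{0..<int N}. dft_root N n ^ k * D n)"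
      using assms(1) outside by (intro sum.mono_neutral_left) (auto simp: D_def)
    also have "\<dots> = blind_stft N L x' w' (int k) m - blind_stft N L x w (int k) m"
      by (simp add: blind_stft_eq_power_sum D_def sum_subtractf right_diff_distrib)
    finally show ?thesis using stft[OF that] by simp
  qed
  ultimately have "D n = 0" using True by (rule power_sums_eq_0_imp_eq_0)
  then show ?thesis by (simp add: D_def)
qed (use outside assms(4) in blast)

section \<open>Recovery shift by shift\<close>

lemma signal_eq_0: "is_signal n x \<Longrightarrow> j < 0 \<or> int n \<le> j \<Longrightarrow> x j = 0"
  unfolding is_signal_def by blast

lemma scale_sig_mult_scale_win:
  assumes "lam (n mod int L) \<noteq> 0"
  shows "scale_sig L lam x n * scale_win L lam w (int m * int L - n) = x n * w (int m * int L - n)"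
proof -
  have "(int L - (int m * int L - n)) mod int L = (n + (1 - int m) * int L) mod int L"
    by (simp add: algebra_simps)
  also have "\<dots> = n mod int L" by (rule mod_mult_self1)
  finally show ?thesis using assms by (simp add: scale_sig_def scale_win_def)
qed

text \<open>Shifts 0 and 1 use all their nonzero products; at a shift \<open>m \<ge> 2\<close> only the time
  indices \<open>n\<close> for which \<open>x[n]\<close> or \<open>w[mL - n]\<close> lies in the block \<open>((m - 1)L, mL]\<close>,
  not yet determined by the earlier shifts.\<close>
definition fresh_set :: "nat \<Rightarrow> nat \<Rightarrow> nat \<Rightarrow> nat \<Rightarrow> int set" where
  "fresh_set N W L m =
     (if m = 0 then {0} else if m = 1 then {0..int L}
      else {n. 0 \<le> n \<and> n < int L \<and> int m * int L - n < int W} \<union>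
           {n. 0 \<le> n \<and> (int m - 1) * int L < n \<and> n \<le> int m * int L \<and> n < int N})"

lemma fresh_set_subset: "L < N \<Longrightarrow> fresh_set N W L m \<subseteq> {0..<int N}"
  by (auto simp: fresh_set_def)

lemma int_mult_right_mono: "k \<le> m \<Longrightarrow> int k * int L \<le> int m * int L"
  by (intro mult_right_mono) auto

locale stft_pair =
  fixes N W L :: nat and x w x' w' :: "int \<Rightarrow> complex"
  assumes L_pos: "1 \<le> L" and L_less_W: "L < W" and W_le_N: "W \<le> N"
    and signal_x: "is_signal N x" and signal_w: "is_signal W w"
    and signal_x': "is_signal N x'" and signal_w': "is_signal W w'"
    and x_nonzero: "\<And>j. 0 \<le> j \<Longrightarrow> j < int L \<Longrightarrow> x j \<noteq> 0"
    and w_nonzero: "\<And>j. 0 \<le> j \<Longrightarrow> j \<le> int L \<Longrightarrow> w j \<noteq> 0"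
begin

definition products_agree :: "nat \<Rightarrow> bool" where
  "products_agree m \<longleftrightarrow>
     (\<forall>n\<in>{0..<int N}. x' n * w' (int m * int L - n) = x n * w (int m * int L - n))"

definition lam :: "int \<Rightarrow> complex" where
  "lam j = x' j / x j"

definition scaled_upto :: "int \<Rightarrow> bool" where
  "scaled_upto b \<longleftrightarrow> (\<forall>n. 0 \<le> n \<and> n \<le> b \<longrightarrow> x' n = scale_sig L lam x n \<and> w' n = scale_win L lam w n)"

lemma products_agree_if_blind_stft_eq:
  assumes "\<And>n. n \<in> {0..<int N} - fresh_set N W L m \<Longrightarrow>
             x' n * w' (int m * int L - n) = x n * w (int m * int L - n)"
    and "\<And>k. k < card (fresh_set N W L m) \<Longrightarrow> blind_stft N L x' w' (int k) m = blind_stft N L x w (int k) m"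
  shows "products_agree m"
proof -
  have "fresh_set N W L m \<subseteq> {0..<int N}" using fresh_set_subset L_less_W W_le_N by simp
  then show ?thesis
    unfolding products_agree_def by (intro ballI products_eq_if_blind_stft_eq[OF _ assms]) simp_all
qed

lemma lam_nonzero:
  assumes "products_agree 1" and "0 \<le> j" and "j < int L"
  shows "lam j \<noteq> 0"
proof -
  have "x' j * w' (int 1 * int L - j) = x j * w (int 1 * int L - j)"
    using assms L_less_W W_le_N unfolding products_agree_def by simp
  moreover have "x j * w (int L - j) \<noteq> 0" using assms(2,3) x_nonzero w_nonzero by simp
  ultimately have "x' j \<noteq> 0" by auto
  then show ?thesis using x_nonzero assms(2,3) by (simp add: lam_def)
qed

lemma lam_mod_nonzero: "products_agree 1 \<Longrightarrow> lam (n mod int L) \<noteq> 0"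
  using lam_nonzero L_pos by simp

lemma scaled_upto_L:
  assumes agree0: "products_agree 0" and agree1: "products_agree 1"
  shows "scaled_upto (int L)"
  unfolding scaled_upto_def
proof (intro allI impI conjI)
  have L_less_N: "int L < int N" using L_less_W W_le_N by simp
  have x'_0: "x' 0 = lam 0 * x 0" and lam_0: "lam 0 \<noteq> 0"
    using x_nonzero[of 0] lam_nonzero[OF agree1, of 0] L_pos by (auto simp: lam_def)
  have "x' 0 * w' 0 = x 0 * w 0"
    using agree0[unfolded products_agree_def, rule_format, of 0] L_less_N by simp
  then have w'_0: "w' 0 = inverse (lam 0) * w 0"
    using x'_0 lam_0 x_nonzero[of 0] L_pos by (simp add: field_simps)
  fix n :: int assume n: "0 \<le> n \<and> n \<le> int L"
  show "x' n = scale_sig L lam x n"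
  proof (cases "n = int L")
    case True
    have "x' n * w' 0 = x n * w 0"
      using agree1[unfolded products_agree_def, rule_format, of "int L"] True L_less_N by simp
    then show ?thesis using True w'_0 lam_0 w_nonzero[of 0] by (simp add: scale_sig_def field_simps)
  qed (use n x_nonzero in \<open>simp add: scale_sig_def lam_def\<close>)
  show "w' n = scale_win L lam w n"
  proof (cases "n = 0")
    case False
    define j where "j = int L - n"
    have j: "0 \<le> j" "j < int L" using n False by (auto simp: j_def)
    then have j_mod: "(int L - n) mod int L = j" by (simp only: j_def[symmetric] mod_pos_pos_trivial)
    have "x' j * w' n = x j * w n"
      using agree1[unfolded products_agree_def, rule_format, of j] j L_less_N by (simp add: j_def)
    then show ?thesis using j j_mod x_nonzero[OF j(1,2)] lam_nonzero[OF agree1 j(1,2)]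
      by (simp add: scale_win_def lam_def field_simps)
  qed (use w'_0 in \<open>simp add: scale_win_def\<close>)
qed

lemma products_agree_outside_fresh_set:
  assumes agree1: "products_agree 1" and "1 \<le> m" and scaled: "scaled_upto (int m * int L)"
    and n: "n \<in> {0..<int N} - fresh_set N W L (Suc m)"
  shows "x' n * w' (int (Suc m) * int L - n) = x n * w (int (Suc m) * int L - n)"
proof (cases "0 \<le> int (Suc m) * int L - n \<and> int (Suc m) * int L - n < int W")
  case True
  have "n \<notin> fresh_set N W L (Suc m)" using n by simp
  then have "int L \<le> n" "n \<le> int m * int L"
    using True n \<open>1 \<le> m\<close> by (auto simp: fresh_set_def algebra_simps)
  moreover have "int L \<le> int m * int L" using int_mult_right_mono[OF \<open>1 \<le> m\<close>] by simp
  ultimately have "x' n = scale_sig L lam x n"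
    and "w' (int (Suc m) * int L - n) = scale_win L lam w (int (Suc m) * int L - n)"
    using scaled True n unfolding scaled_upto_def by (auto simp: algebra_simps)
  then show ?thesis using scale_sig_mult_scale_win lam_mod_nonzero[OF agree1] by metis
qed (auto simp: signal_eq_0[OF signal_w] signal_eq_0[OF signal_w'])

lemma signal_scaled_next_block:
  assumes agree1: "products_agree 1" and "1 \<le> m" and scaled: "scaled_upto (int m * int L)"
    and agree: "products_agree (Suc m)"
    and n: "int m * int L < n" "n \<le> int (Suc m) * int L"
  shows "x' n = scale_sig L lam x n"
proof (cases "n < int N")
  case True
  define j where "j = int (Suc m) * int L - n"
  have L_le: "int L \<le> int m * int L" using int_mult_right_mono[OF \<open>1 \<le> m\<close>] by simp
  have "int (Suc m) * int L = int m * int L + int L" by (simp add: algebra_simps)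
  then have j: "0 \<le> j" "j < int L" "j \<le> int m * int L" using n L_le unfolding j_def by linarith+
  have "x' n * w' j = x n * w j"
    using agree[unfolded products_agree_def, rule_format, of n] n True L_le by (simp add: j_def)
  moreover have "w' j = scale_win L lam w j" using scaled j unfolding scaled_upto_def by blast
  moreover have "(int L - j) mod int L = n mod int L"
    using mod_mult_self1[of "n - int m * int L" "int m" "int L"] by (simp add: j_def algebra_simps)
  ultimately show ?thesis using w_nonzero[of j] j lam_mod_nonzero[OF agree1, of n]
    by (auto simp: scale_sig_def scale_win_def field_simps)
qed (simp add: scale_sig_def signal_eq_0[OF signal_x] signal_eq_0[OF signal_x'])

lemma window_scaled_next_block:
  assumes agree1: "products_agree 1" and "1 \<le> m" and scaled: "scaled_upto (int m * int L)"
    and agree: "products_agree (Suc m)"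
    and n: "int m * int L < n" "n \<le> int (Suc m) * int L"
  shows "w' n = scale_win L lam w n"
proof (cases "n < int W")
  case True
  define j where "j = int (Suc m) * int L - n"
  have L_le: "int L \<le> int m * int L" using int_mult_right_mono[OF \<open>1 \<le> m\<close>] by simp
  have "int (Suc m) * int L = int m * int L + int L" by (simp add: algebra_simps)
  then have j: "0 \<le> j" "j < int L" "j \<le> int m * int L" using n L_le unfolding j_def by linarith+
  have "x' j * w' n = x j * w n"
    using agree[unfolded products_agree_def, rule_format, of j] j L_less_W W_le_N
    by (simp add: j_def)
  moreover have "x' j = scale_sig L lam x j" using scaled j unfolding scaled_upto_def by blast
  moreover have "(int L - n) mod int L = j mod int L"
    using mod_mult_self1[of "int L - n" "int m" "int L"] by (simp add: j_def algebra_simps)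
  ultimately show ?thesis using x_nonzero[of j] j lam_mod_nonzero[OF agree1, of j]
    by (auto simp: scale_sig_def scale_win_def field_simps)
qed (simp add: scale_win_def signal_eq_0[OF signal_w] signal_eq_0[OF signal_w'])

lemma scaled_upto_extend:
  assumes "products_agree 1" and "1 \<le> m" and scaled: "scaled_upto (int m * int L)"
    and "products_agree (Suc m)"
  shows "scaled_upto (int (Suc m) * int L)"
  unfolding scaled_upto_def
proof (intro allI impI)
  fix n :: int assume n: "0 \<le> n \<and> n \<le> int (Suc m) * int L"
  show "x' n = scale_sig L lam x n \<and> w' n = scale_win L lam w n"
  proof (cases "n \<le> int m * int L")
    case False
    then show ?thesis
      using n signal_scaled_next_block[OF assms] window_scaled_next_block[OF assms] by simp
  qed (use scaled n in \<open>simp add: scaled_upto_def\<close>)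
qed

context
  assumes blind_stft_eq: "\<And>m k. k < card (fresh_set N W L m) \<Longrightarrow>
    blind_stft N L x' w' (int k) m = blind_stft N L x w (int k) m"
begin

lemma products_agree_0: "products_agree 0"
  by (rule products_agree_if_blind_stft_eq[OF _ blind_stft_eq])
    (auto simp: fresh_set_def signal_eq_0[OF signal_w] signal_eq_0[OF signal_w'])

lemma products_agree_1: "products_agree 1"
  by (rule products_agree_if_blind_stft_eq[OF _ blind_stft_eq])
    (auto simp: fresh_set_def signal_eq_0[OF signal_w] signal_eq_0[OF signal_w'])

lemma scaled_upto_multiple: "1 \<le> m \<Longrightarrow> scaled_upto (int m * int L)"
proof (induction m rule: nat_induct_at_least)
  case base
  show ?case using scaled_upto_L[OF products_agree_0 products_agree_1] by simp
next
  case (Suc m)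
  have "products_agree (Suc m)"
    using products_agree_outside_fresh_set[OF products_agree_1 Suc.hyps Suc.IH]
    by (rule products_agree_if_blind_stft_eq[OF _ blind_stft_eq])
  then show ?case using scaled_upto_extend[OF products_agree_1 Suc.hyps Suc.IH] by simp
qed

lemma scaling_of_blind_stft_eq:
  "\<exists>lam. (\<forall>j. 0 \<le> j \<and> j < int L \<longrightarrow> lam j \<noteq> 0) \<and>
     x' = scale_sig L lam x \<and> w' = scale_win L lam w"
proof (intro exI conjI allI impI)
  show "lam j \<noteq> 0" if "0 \<le> j \<and> j < int L" for j
    using lam_nonzero[OF products_agree_1] that by blast
  have scaled: "x' n = scale_sig L lam x n \<and> w' n = scale_win L lam w n" if "0 \<le> n" for n
  proof -
    have "Suc (nat n) \<le> Suc (nat n) * L"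
      using mult_le_mono2[OF L_pos, of "Suc (nat n)"] by (simp only: mult_1_right)
    then have "int (Suc (nat n)) \<le> int (Suc (nat n)) * int L" by (metis of_nat_le_iff of_nat_mult)
    moreover have "n < int (Suc (nat n))" using that by simp
    ultimately have "n \<le> int (Suc (nat n)) * int L" by linarith
    then show ?thesis
      using scaled_upto_multiple[of "Suc (nat n)"] that unfolding scaled_upto_def by simp
  qed
  show "x' = scale_sig L lam x"
  proof
    fix n show "x' n = scale_sig L lam x n"
      using scaled[of n]
      by (cases "0 \<le> n") (simp_all add: scale_sig_def signal_eq_0[OF signal_x] signal_eq_0[OF signal_x'])
  qed
  show "w' = scale_win L lam w"
  proof
    fix n show "w' n = scale_win L lam w n"
      using scaled[of n]
      by (cases "0 \<le> n") (simp_all add: scale_win_def signal_eq_0[OF signal_w] signal_eq_0[OF signal_w'])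
  qed
qed

end

end

section \<open>Counting the samples\<close>

lemma int_eq_0_if_abs_mult_less:
  fixes q L :: int
  assumes "0 < L" and "\<bar>q * L\<bar> < L"
  shows "q = 0"
proof -
  have "\<bar>q\<bar> * L < 1 * L" using assms by (simp add: abs_mult)
  then have "\<bar>q\<bar> < 1" using assms(1) by (simp only: mult_less_cancel_right)
  then show ?thesis by simp
qed

lemma finite_card_window_pairs:
  fixes L W :: nat
  assumes "1 \<le> L"
  defines "A \<equiv> {(m, n). 2 \<le> m \<and> 0 \<le> n \<and> n < int L \<and> int m * int L - n < int W}"
  shows "finite A" and "card A \<le> W - L - 1"
proof -
  have inj: "inj_on (\<lambda>(m, n). int m * int L - n) A"
  proof (rule inj_onI)
    fix p q assume "p \<in> A" "q \<in> A" "(\<lambda>(m, n). int m * int L - n) p = (\<lambda>(m, n). int m * int L - n) q"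
    moreover obtain a r b s where pq: "p = (a, r)" "q = (b, s)" by fastforce
    ultimately have "(a, r) \<in> A" "(b, s) \<in> A" and eq: "int a * int L - r = int b * int L - s"
      by simp_all
    then have "\<bar>(int a - int b) * int L\<bar> < int L" by (auto simp: A_def algebra_simps)
    then have "a = b" using int_eq_0_if_abs_mult_less[of "int L" "int a - int b"] assms(1) by simp
    then show "p = q" using eq pq by simp
  qed
  have image: "(\<lambda>(m, n). int m * int L - n) ` A \<subseteq> {int L<..<int W}"
  proof -
    have "int m * int L - n \<in> {int L<..<int W}" if "(m, n) \<in> A" for m n
    proof -
      have "2 \<le> m" "n < int L" "int m * int L - n < int W" using that by (simp_all add: A_def)
      then show ?thesis using int_mult_right_mono[of 2 m L] by simp
    qed
    then show ?thesis by auto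
  qed
  show "finite A" using inj_on_finite[OF inj image] by simp
  have "card A \<le> card {int L<..<int W}" using card_inj_on_le[OF inj image] by simp
  then show "card A \<le> W - L - 1" by simp
qed

lemma finite_card_signal_pairs:
  fixes L N :: nat
  assumes "1 \<le> L"
  defines "B \<equiv> {(m, n). 2 \<le> m \<and> 0 \<le> n \<and> (int m - 1) * int L < n \<and> n \<le> int m * int L \<and> n < int N}"
  shows "finite B" and "card B \<le> N - L - 1"
proof -
  have inj: "inj_on snd B"
  proof (rule inj_onI)
    fix p q assume "p \<in> B" "q \<in> B" "snd p = snd q"
    moreover obtain a b n where pq: "p = (a, n)" "q = (b, n)"
      using \<open>snd p = snd q\<close> by (metis prod.collapse)
    ultimately have "\<bar>(int a - int b) * int L\<bar> < int L" by (auto simp: B_def algebra_simps)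
    then have "a = b" using int_eq_0_if_abs_mult_less[of "int L" "int a - int b"] assms(1) by simp
    then show "p = q" using pq by simp
  qed
  have image: "snd ` B \<subseteq> {int L<..<int N}"
  proof clarify
    fix m n assume "(m, n) \<in> B"
    moreover have "int L \<le> (int m - 1) * int L" if "2 \<le> m"
      using int_mult_right_mono[OF that, of L] by (simp add: algebra_simps)
    ultimately show "snd (m, n) \<in> {int L<..<int N}" by (auto simp: B_def)
  qed
  show "finite B" using inj_on_finite[OF inj image] by simp
  have "card B \<le> card {int L<..<int N}" using card_inj_on_le[OF inj image] by simp
  then show "card B \<le> N - L - 1" by simp
qed

lemma sum_card_fresh_set_le:
  assumes "1 \<le> L" and "L < W" and "W \<le> N"
  shows "(\<Sum>m<M. card (fresh_set N W L m)) \<le> N + W - L"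
proof -
  define A where "A = {(m, n). 2 \<le> m \<and> 0 \<le> n \<and> n < int L \<and> int m * int L - n < int W}"
  define B where "B = {(m, n). 2 \<le> m \<and> 0 \<le> n \<and> (int m - 1) * int L < n \<and> n \<le> int m * int L \<and> n < int N}"
  note A = finite_card_window_pairs[OF assms(1), of W, folded A_def]
  note B = finite_card_signal_pairs[OF assms(1), of N, folded B_def]
  define C where "C = {(0 :: nat, 0 :: int)} \<union> {1} \<times> {0..int L}"
  have "finite (fresh_set N W L m)" for m
    using fresh_set_subset[of L N W m] assms finite_subset by fastforce
  then have "(\<Sum>m<M. card (fresh_set N W L m)) = card (SIGMA m:{..<M}. fresh_set N W L m)"
    by simp
  also have "\<dots> \<le> card (C \<union> A \<union> B)"
  proof (rule card_mono)
    show "finite (C \<union> A \<union> B)" using A B by (simp add: C_def)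
    have "(m, n) \<in> C \<union> A \<union> B" if "n \<in> fresh_set N W L m" for m n
      using that by (cases "m = 0 \<or> m = 1") (auto simp: fresh_set_def A_def B_def C_def)
    then show "(SIGMA m:{..<M}. fresh_set N W L m) \<subseteq> C \<union> A \<union> B" by blast
  qed
  also have "\<dots> \<le> card C + card A + card B"
    by (intro order_trans[OF card_Un_le] add_mono le_refl card_Un_le)
  also have "card C \<le> 1 + (L + 1)"
    using card_Un_le[of "{(0::nat, 0::int)}" "{1} \<times> {0..int L}"]
    by (simp add: C_def card_cartesian_product)
  finally show ?thesis using A B assms by linarith
qed

lemma less_num_shifts:
  assumes "1 \<le> L" and "m * L < N + W - 1"
  shows "m < num_shifts N W L"
proof -
  have "real m * real L < real (N + W - 1)" using assms(2) by (metis of_nat_less_iff of_nat_mult)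
  then have "real m < real (N + W - 1) / real L" using assms(1) by (simp add: field_simps)
  also have "\<dots> \<le> of_int \<lceil>real (N + W - 1) / real L\<rceil>" by (rule le_of_int_ceiling)
  finally show ?thesis unfolding num_shifts_def by linarith
qed

lemma fresh_set_nonempty_imp_less_num_shifts:
  assumes "1 \<le> L" and "L < W" and "W \<le> N" and "fresh_set N W L m \<noteq> {}"
  shows "m < num_shifts N W L"
proof (rule less_num_shifts[OF assms(1)])
  show "m * L < N + W - 1"
  proof (cases "m \<le> 1")
    case True
    then have "m * L \<le> L" by (cases m) auto
    then show ?thesis using assms by linarith
  next
    case False
    then obtain n where "n \<in> fresh_set N W L m" using assms(4) by blast
    then have "0 \<le> n \<and> n < int L \<and> int m * int L - n < int W \<or> (int m - 1) * int L < n \<and> n < int N"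
      using False unfolding fresh_set_def by auto
    then have "int m * int L < int N + int W - 1" using assms by (auto simp: algebra_simps)
    then have "int (m * L) < int (N + W - 1)" using assms by simp
    then show ?thesis by linarith
  qed
qed

definition stft_samples :: "nat \<Rightarrow> nat \<Rightarrow> nat \<Rightarrow> (int \<times> nat) set" where
  "stft_samples N W L =
     (\<lambda>(m, k). (int k, m)) ` (SIGMA m:{..<num_shifts N W L}. {..<card (fresh_set N W L m)})"

lemma stft_samples_subset:
  assumes "L < N"
  shows "stft_samples N W L \<subseteq> {0..<int N} \<times> {0..<num_shifts N W L}"
proof -
  have card_le: "card (fresh_set N W L m) \<le> N" for m
    using card_mono[OF _ fresh_set_subset[OF assms]] by fastforce
  have "(int k, m) \<in> {0..<int N} \<times> {0..<num_shifts N W L}"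
    if "m < num_shifts N W L" and "k < card (fresh_set N W L m)" for m k
  proof -
    have "k < N" using that(2) card_le[of m] by linarith
    then show ?thesis using that(1) by simp
  qed
  then show ?thesis unfolding stft_samples_def by auto
qed

lemma card_stft_samples_le:
  assumes "1 \<le> L" and "L < W" and "W \<le> N"
  shows "card (stft_samples N W L) \<le> N + W - L"
proof -
  let ?grid = "SIGMA m:{..<num_shifts N W L}. {..<card (fresh_set N W L m)}"
  have "inj (\<lambda>(m :: nat, k :: nat). (int k, m))" by (auto simp: inj_def)
  then have "inj_on (\<lambda>(m, k). (int k, m)) ?grid" by (rule inj_on_subset) simp
  then have "card (stft_samples N W L) = card ?grid" unfolding stft_samples_def by (rule card_image)
  also have "\<dots> = (\<Sum>m<num_shifts N W L. card (fresh_set N W L m))" by simp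
  also have "\<dots> \<le> N + W - L" by (rule sum_card_fresh_set_le[OF assms])
  finally show ?thesis .
qed

lemma mem_stft_samples:
  assumes "1 \<le> L" and "L < W" and "W \<le> N" and "k < card (fresh_set N W L m)"
  shows "(int k, m) \<in> stft_samples N W L"
proof -
  have "fresh_set N W L m \<noteq> {}" using assms(4) by auto
  then have "m < num_shifts N W L" by (rule fresh_set_nonempty_imp_less_num_shifts[OF assms(1-3)])
  then show ?thesis
    using assms(4) unfolding stft_samples_def by (intro image_eqI[of _ _ "(m, k)"]) auto
qed

lemma card_sample_grid_ge:
  assumes "1 \<le> L" and "L < W" and "W \<le> N"
  shows "N + W - L \<le> card ({0..<int N} \<times> {0..<num_shifts N W L})"
proof -
  have "1 < num_shifts N W L" using less_num_shifts[OF assms(1), of 1 N W] assms by simp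
  then have "N * 2 \<le> N * num_shifts N W L" by (intro mult_le_mono2) simp
  moreover have "card ({0..<int N} \<times> {0..<num_shifts N W L}) = N * num_shifts N W L"
    by (simp add: card_cartesian_product)
  ultimately show ?thesis using assms by linarith
qed

section \<open>Genericity\<close>

definition monomial_coeffs :: "(nat \<Rightarrow> nat) \<Rightarrow> (nat \<Rightarrow> nat) \<Rightarrow> real" where
  "monomial_coeffs a b = (if b = a then 1 else 0)"

lemma nonzero_poly_monomial_coeffs:
  "(\<And>i. nv \<le> i \<Longrightarrow> a i = 0) \<Longrightarrow> nonzero_poly nv (monomial_coeffs a)"
  by (auto simp: nonzero_poly_def is_poly_def monomial_coeffs_def)

lemma poly_eval_monomial_coeffs:
  "poly_eval nv (monomial_coeffs a) z = (\<Prod>i<nv. z i ^ a i)"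
proof -
  have "{b. monomial_coeffs a b \<noteq> 0} = {a}" by (auto simp: monomial_coeffs_def)
  then show ?thesis by (simp add: poly_eval_def monomial_coeffs_def)
qed

text \<open>In the coordinates of \<open>realify\<close> this selects \<open>Re x[j]\<close> for \<open>j < L\<close> and
  \<open>Re w[j]\<close> for \<open>j \<le> L\<close>.\<close>
definition leading_entries_exponent :: "nat \<Rightarrow> nat \<Rightarrow> nat \<Rightarrow> nat" where
  "leading_entries_exponent N L i =
     (if even i \<and> (i < 2 * L \<or> 2 * N \<le> i \<and> i \<le> 2 * N + 2 * L) then 1 else 0)"

lemma leading_entries_nonzero:
  assumes "L < W" and "W \<le> N"
    and "poly_eval (2 * N + 2 * W) (monomial_coeffs (leading_entries_exponent N L)) (realify N x w) \<noteq> 0"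
  shows "\<And>j. 0 \<le> j \<Longrightarrow> j < int L \<Longrightarrow> x j \<noteq> 0"
    and "\<And>j. 0 \<le> j \<Longrightarrow> j \<le> int L \<Longrightarrow> w j \<noteq> 0"
proof -
  have selected: "realify N x w i \<noteq> 0"
    if "i < 2 * N + 2 * W" and "leading_entries_exponent N L i = 1" for i
    using assms(3) that by (auto simp: poly_eval_monomial_coeffs)
  fix j :: int assume "0 \<le> j"
  show "x j \<noteq> 0" if "j < int L"
  proof -
    have "realify N x w (2 * nat j) \<noteq> 0"
      using \<open>0 \<le> j\<close> that assms(1,2) by (intro selected) (auto simp: leading_entries_exponent_def)
    moreover have "nat j < N" using that assms(1,2) by linarith
    ultimately show ?thesis using \<open>0 \<le> j\<close> by (auto simp: realify_def)
  qed
  show "w j \<noteq> 0" if "j \<le> int L"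
  proof -
    have "realify N x w (2 * N + 2 * nat j) \<noteq> 0"
      using \<open>0 \<le> j\<close> that assms(1,2) by (intro selected) (auto simp: leading_entries_exponent_def)
    then show ?thesis using \<open>0 \<le> j\<close> by (auto simp: realify_def)
  qed
qed

lemma scaling_if_stft_samples_eq:
  assumes "1 \<le> L" and "L < W" and "W \<le> N"
    and "is_signal N x" and "is_signal W w" and "is_signal N x'" and "is_signal W w'"
    and "poly_eval (2 * N + 2 * W) (monomial_coeffs (leading_entries_exponent N L)) (realify N x w) \<noteq> 0"
    and samples_eq: "\<forall>(k, m)\<in>stft_samples N W L. blind_stft N L x' w' k m = blind_stft N L x w k m"
  shows "\<exists>lam. (\<forall>j. 0 \<le> j \<and> j < int L \<longrightarrow> lam j \<noteq> 0) \<and>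
           x' = scale_sig L lam x \<and> w' = scale_win L lam w"
proof -
  note nonzero = leading_entries_nonzero[OF assms(2,3,8)]
  interpret stft_pair N W L x w x' w'
    using assms(1-7) nonzero by unfold_locales simp_all
  show ?thesis
  proof (rule scaling_of_blind_stft_eq)
    fix m k assume "k < card (fresh_set N W L m)"
    then have "(int k, m) \<in> stft_samples N W L" by (rule mem_stft_samples[OF assms(1-3)])
    then show "blind_stft N L x' w' (int k) m = blind_stft N L x w (int k) m" using samples_eq by auto
  qed
qed

theorem theorem1:
  fixes N W L :: nat
  assumes "1 \<le> L" and "L < W" and "W \<le> N"
  shows "\<exists>\<Omega> :: (int \<times> nat) set.
           \<Omega> \<subseteq> {0..<int N} \<times> {0..<num_shifts N W L} \<and>
           card \<Omega> = N + W - L \<and>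
           (\<exists>c. nonzero_poly (2 * N + 2 * W) c \<and>
              (\<forall>x w. is_signal N x \<and> is_signal W w \<and>
                  poly_eval (2 * N + 2 * W) c (realify N x w) \<noteq> 0 \<longrightarrow>
                (\<forall>x' w'. is_signal N x' \<and> is_signal W w' \<and>
                   (\<forall>(k, m)\<in>\<Omega>. blind_stft N L x' w' k m = blind_stft N L x w k m) \<longrightarrow>
                   (\<exists>lam. (\<forall>j. 0 \<le> j \<and> j < int L \<longrightarrow> lam j \<noteq> 0) \<and>
                          x' = scale_sig L lam x \<and> w' = scale_win L lam w))))"
proof -
  obtain \<Omega> where samples: "stft_samples N W L \<subseteq> \<Omega>"
    and grid: "\<Omega> \<subseteq> {0..<int N} \<times> {0..<num_shifts N W L}" and card: "card \<Omega> = N + W - L"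
    using exists_subset_between[OF card_stft_samples_le[OF assms] card_sample_grid_ge[OF assms]
        stft_samples_subset] assms by auto
  define c where "c = monomial_coeffs (leading_entries_exponent N L)"
  have "nonzero_poly (2 * N + 2 * W) c"
    unfolding c_def using assms
    by (intro nonzero_poly_monomial_coeffs) (simp add: leading_entries_exponent_def)
  moreover have "\<exists>lam. (\<forall>j. 0 \<le> j \<and> j < int L \<longrightarrow> lam j \<noteq> 0) \<and>
                    x' = scale_sig L lam x \<and> w' = scale_win L lam w"
    if "is_signal N x \<and> is_signal W w \<and> poly_eval (2 * N + 2 * W) c (realify N x w) \<noteq> 0"
      and "is_signal N x' \<and> is_signal W w' \<and>
        (\<forall>(k, m)\<in>\<Omega>. blind_stft N L x' w' k m = blind_stft N L x w k m)"
    for x w x' w'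
    using scaling_if_stft_samples_eq[OF assms, of x w x' w'] that samples unfolding c_def by blast
  ultimately show ?thesis
    using grid card by (intro exI[of _ \<Omega>] exI[of _ c] conjI allI impI) simp_all
qed

end
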